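(* Let $(C,\mathfrak p,\mathfrak d)$ be a regular $q$-cycle coalgebra. Then $\mathfrak d_{10}^1=\mathfrak p_{10}^1=1$ or $\mathfrak d_{11}^1=\mathfrak p_{11}^1=0$.
   Context: $K$ is an algebraically closed field of characteristic $0$ and $n\ge2$. $C$ is the coalgebra dual to $K[y]/\langle y^n\rangle$: basis $x_0,\dots,x_{n-1}$, $\Delta(x_i)=\sum_{j+k=i}x_j\otimes x_k$, $\epsilon(x_i)=\delta_{i0}$; $C\otimes C$ has the tensor product coalgebra structure; Sweedler notation $\Delta(b)=b_{(1)}\otimes b_{(2)}$. For linear maps $\mathfrak p,\mathfrak d\colon C\otimes C\to C$ write $a\cdot b=\mathfrak p(a\otimes b)$, $a:b=\mathfrak d(a\otimes b)$, $\mathfrak p(x_i\otimes x_j)=\sum_{k=0}^{n-1}\mathfrak p_{ij}^kx_k$, $\mathfrak d(x_i\otimes x_j)=\sum_{k=0}^{n-1}\mathfrak d_{ij}^kx_k$. A triple $(C,\mathfrak p,\mathfrak d)$ with $\mathfrak p,\mathfrak d$ coalgebra morphisms is a regular $q$-magma coalgebra if there are coalgebra morphisms $a\otimes b\mapsto a^b$, $a\otimes b\mapsto a_b$ from $C\otimes C$ to $C$ with $a^{b_{(1)}}\cdot b_{(2)}=(a\cdot b_{(1)})^{b_{(2)}}=\epsilon(b)a$ and $(a:b_{(2)})_{b_{(1)}}=a_{b_{(2)}}:b_{(1)}=\epsilon(b)a$. It is a regular $q$-cycle coalgebra if moreover for all $a,b,c$: (1) $(a\cdot b_{(1)})\cdot(c:b_{(2)})=(a\cdot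 c_{(2)})\cdot(b\cdot c_{(1)})$; (2) $(a\cdot b_{(1)}):(c\cdot b_{(2)})=(a:c_{(2)})\cdot(b:c_{(1)})$; (3) $(a:b_{(1)}):(c:b_{(2)})=(a:c_{(2)}):(b\cdot c_{(1)})$. *)

theory Defs
  imports "HOL-Computational_Algebra.Polynomial"
begin

text \<open>
  C is the coalgebra with basis x_0, ..., x_(n-1), Delta(x_i) = sum_(j+k=i) x_j (x) x_k,
  eps(x_i) = delta_(i,0).  A linear map f : C (x) C -> C is encoded by its structure
  constants  f i j k  (coefficient of x_k in f(x_i (x) x_j)), only indices < n matter.
  All identities of linear maps below are checked on basis elements (equivalent by
  multilinearity).
\<close>

type_synonym 'a sc = "nat \<Rightarrow> nat \<Rightarrow> nat \<Rightarrow> 'a"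

definition alg_closed_field :: "'a::field itself \<Rightarrow> bool" where
  "alg_closed_field _ \<longleftrightarrow> (\<forall>q::'a poly. degree q > 0 \<longrightarrow> (\<exists>x. poly q x = 0))"

text \<open>f : C (x) C -> C is a coalgebra morphism (C (x) C with the tensor product coalgebra
  structure): eps o f = eps (x) eps and Delta o f = (f (x) f) o Delta_(C(x)C), where
  Delta_(C(x)C)(x_i (x) x_j) = sum_(a+b=i, c+d=j) (x_a (x) x_c) (x) (x_b (x) x_d).\<close>
definition coalg_morph :: "nat \<Rightarrow> ('a::field) sc \<Rightarrow> bool" where
  "coalg_morph n f \<longleftrightarrow>
     (\<forall>i<n. \<forall>j<n. f i j 0 = (if i = 0 \<and> j = 0 then 1 else 0)) \<and>
     (\<forall>i<n. \<forall>j<n. \<forall>k<n. \<forall>l<n.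
        (if k + l < n then f i j (k + l) else 0) =
        (\<Sum>a\<le>i. \<Sum>c\<le>j. f a c k * f (i - a) (j - c) l))"

text \<open>Regular q-magma coalgebra; u encodes a (x) b |-> a^b, v encodes a (x) b |-> a_b.
  With a = x_i, b = x_j, Delta(b) = sum_(s+t=j) x_s (x) x_t.\<close>
definition regular_q_magma :: "nat \<Rightarrow> ('a::field) sc \<Rightarrow> 'a sc \<Rightarrow> bool" where
  "regular_q_magma n p d \<longleftrightarrow> coalg_morph n p \<and> coalg_morph n d \<and>
     (\<exists>u v. coalg_morph n u \<and> coalg_morph n v \<and>
       (\<forall>i<n. \<forall>j<n. \<forall>k<n.
          (\<Sum>s\<le>j. \<Sum>m<n. u i s m * p m (j - s) k) = (if j = 0 \<and> i = k then 1 else 0) \<and>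
          (\<Sum>s\<le>j. \<Sum>m<n. p i s m * u m (j - s) k) = (if j = 0 \<and> i = k then 1 else 0) \<and>
          (\<Sum>s\<le>j. \<Sum>m<n. d i (j - s) m * v m s k) = (if j = 0 \<and> i = k then 1 else 0) \<and>
          (\<Sum>s\<le>j. \<Sum>m<n. v i (j - s) m * d m s k) = (if j = 0 \<and> i = k then 1 else 0)))"

text \<open>Regular q-cycle coalgebra: identities (1)-(3) on a = x_i, b = x_j, c = x_l,
  compared coefficientwise at x_k.\<close>
definition regular_q_cycle :: "nat \<Rightarrow> ('a::field) sc \<Rightarrow> 'a sc \<Rightarrow> bool" where
  "regular_q_cycle n p d \<longleftrightarrow> regular_q_magma n p d \<and>
     (\<forall>i<n. \<forall>j<n. \<forall>l<n. \<forall>k<n.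
        (\<Sum>s\<le>j. \<Sum>m<n. \<Sum>r<n. p i s m * d l (j - s) r * p m r k) =
        (\<Sum>s\<le>l. \<Sum>m<n. \<Sum>r<n. p i (l - s) m * p j s r * p m r k) \<and>
        (\<Sum>s\<le>j. \<Sum>m<n. \<Sum>r<n. p i s m * p l (j - s) r * d m r k) =
        (\<Sum>s\<le>l. \<Sum>m<n. \<Sum>r<n. d i (l - s) m * d j s r * p m r k) \<and>
        (\<Sum>s\<le>j. \<Sum>m<n. \<Sum>r<n. d i s m * d l (j - s) r * d m r k) =
        (\<Sum>s\<le>l. \<Sum>m<n. \<Sum>r<n. d i (l - s) m * p j s r * d m r k))"

end

theory Submission
  imports Defs
begin

text \<open>
  For a coalgebra morphism f : C (x) C -> C put alpha = f_10^1 and beta = f_01^1.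
  Comparing coefficients in Delta o f = (f (x) f) o Delta shows that f_ij^k = 0 for
  k > i + j (the grouplike element f(x_0 (x) x_0) has its coefficients f_00^k = (f_00^1)^k,
  which must die in degree n), that f_m0^m = alpha^m, and that
  f_m1^(m+1) = (m + 1) alpha^m beta. For m = n - 1 the coefficient of degree n falls out
  of C, so n alpha^(n-1) beta = 0; in characteristic 0 this forces beta = 0 once alpha is
  nonzero.

  The inverses required by regularity make alpha nonzero for both p and d. Then, modulo
  degree 2, both maps are determined on x_0 and x_1 by alpha and gamma = f_11^1, and the
  coefficient of x_1 in the cycle identities says gamma = 0 or alpha = 1 for each of the
  four pairings of gamma_p, gamma_d with alpha_p, alpha_d.
\<close>

lemma sum_lessThan_eq_0_1:
  fixes g :: "nat \<Rightarrow> 'a::comm_monoid_add"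
  assumes "2 \<le> n" and "\<And>m. 2 \<le> m \<Longrightarrow> m < n \<Longrightarrow> g m = 0"
  shows "(\<Sum>m<n. g m) = g 0 + g 1"
proof -
  have "(\<Sum>m<n. g m) = (\<Sum>m<2. g m)"
    using assms by (intro sum.mono_neutral_right) auto
  then show ?thesis by (simp add: numeral_2_eq_2)
qed

lemma coalg_morph_counit:
  assumes "coalg_morph n f" "i < n" "j < n"
  shows "f i j 0 = (if i = 0 \<and> j = 0 then 1 else 0)"
  using assms unfolding coalg_morph_def by blast

lemma coalg_morph_comult:
  assumes "coalg_morph n f" "i < n" "j < n" "k < n" "l < n"
  shows "(if k + l < n then f i j (k + l) else 0) =
    (\<Sum>a\<le>i. \<Sum>c\<le>j. f a c k * f (i - a) (j - c) l)"
  using assms unfolding coalg_morph_def by blast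

lemma coalg_morph_0_0_1:
  assumes f: "coalg_morph n f" and n: "2 \<le> n"
  shows "f 0 0 1 = 0"
proof -
  have power: "f 0 0 k = f 0 0 1 ^ k" if "k < n" for k
    using that
  proof (induction k)
    case 0
    then show ?case using coalg_morph_counit[OF f] by simp
  next
    case (Suc k)
    then show ?case using coalg_morph_comult[OF f, of 0 0 k 1] n by simp
  qed
  have "0 = f 0 0 (n - 1) * f 0 0 1"
    using coalg_morph_comult[OF f, of 0 0 "n - 1" 1] n by simp
  also have "\<dots> = f 0 0 1 ^ n"
    using power[of "n - 1"] n by (simp flip: power_Suc2)
  finally show ?thesis by simp
qed

lemma coalg_morph_eq_0_above_degree:
  assumes f: "coalg_morph n f" and n: "2 \<le> n"
  shows "i < n \<Longrightarrow> j < n \<Longrightarrow> k < n \<Longrightarrow> i + j < k \<Longrightarrow> f i j k = 0"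
proof (induction k arbitrary: i j)
  case 0
  then show ?case by simp
next
  case (Suc k)
  have "f a c k * f (i - a) (j - c) 1 = 0" if "a \<le> i" "c \<le> j" for a c
  proof (cases "a + c < k")
    case True
    then show ?thesis using Suc that by simp
  next
    case False
    then have "a = i" "c = j" using that Suc.prems by auto
    then show ?thesis using coalg_morph_0_0_1[OF f n] by simp
  qed
  then have "(\<Sum>a\<le>i. \<Sum>c\<le>j. f a c k * f (i - a) (j - c) 1) = 0"
    by (intro sum.neutral ballI) simp
  then show ?case using coalg_morph_comult[OF f, of i j k 1] Suc.prems n by simp
qed

lemma coalg_morph_diag:
  assumes f: "coalg_morph n f" and n: "2 \<le> n"
  shows "m < n \<Longrightarrow> f m 0 m = f 1 0 1 ^ m"
proof (induction m)
  case 0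
  then show ?case using coalg_morph_counit[OF f] by simp
next
  case (Suc m)
  have "f (Suc m) 0 (Suc m) = (\<Sum>a\<le>Suc m. f a 0 m * f (Suc m - a) 0 1)"
    using coalg_morph_comult[OF f, of "Suc m" 0 m 1] Suc.prems n by simp
  also have "\<dots> = (\<Sum>a<m. f a 0 m * f (Suc m - a) 0 1) + f m 0 m * f 1 0 1"
    using coalg_morph_0_0_1[OF f n] by (simp flip: lessThan_Suc_atMost)
  also have "(\<Sum>a<m. f a 0 m * f (Suc m - a) 0 1) = 0"
    using coalg_morph_eq_0_above_degree[OF f n] Suc.prems by (intro sum.neutral) simp
  finally show ?case using Suc by simp
qed

lemma coalg_morph_comult_at_1_1:
  assumes f: "coalg_morph n f" and n: "2 \<le> n" and m: "Suc m < n"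
  shows "(\<Sum>a\<le>Suc m. \<Sum>c\<le>1. f a c (Suc m) * f (Suc m - a) (1 - c) 1) =
    f 1 0 1 * f m 1 (Suc m) + f 1 0 1 ^ Suc m * f 0 1 1"
proof -
  note vanish = coalg_morph_eq_0_above_degree[OF f n]
  have "(\<Sum>a<m. \<Sum>c\<le>1. f a c (Suc m) * f (Suc m - a) (1 - c) 1) = 0"
    using vanish m by (intro sum.neutral) simp
  then show ?thesis
    using vanish[of m 0 "Suc m"] m coalg_morph_0_0_1[OF f n] coalg_morph_diag[OF f n m]
    by (simp add: algebra_simps flip: lessThan_Suc_atMost)
qed

lemma coalg_morph_subdiag:
  assumes f: "coalg_morph n f" and n: "2 \<le> n"
  shows "Suc m < n \<Longrightarrow> f m 1 (Suc m) = of_nat (Suc m) * f 1 0 1 ^ m * f 0 1 1"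
proof (induction m)
  case 0
  then show ?case by simp
next
  case (Suc m)
  have "f (Suc m) 1 (Suc (Suc m)) =
      (\<Sum>a\<le>Suc m. \<Sum>c\<le>1. f a c (Suc m) * f (Suc m - a) (1 - c) 1)"
    using coalg_morph_comult[OF f, of "Suc m" 1 "Suc m" 1] Suc.prems by simp
  also have "\<dots> = f 1 0 1 * f m 1 (Suc m) + f 1 0 1 ^ Suc m * f 0 1 1"
    using coalg_morph_comult_at_1_1[OF f n] Suc.prems by simp
  finally show ?case using Suc by (simp add: algebra_simps)
qed

lemma coalg_morph_0_1_1:
  fixes f :: "('a::field_char_0) sc"
  assumes f: "coalg_morph n f" and n: "2 \<le> n" and alpha: "f 1 0 1 \<noteq> 0"
  shows "f 0 1 1 = 0"
proof -
  obtain m where m: "n = Suc (Suc m)" using n by (metis add_2_eq_Suc le_Suc_ex)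
  have "0 = (\<Sum>a\<le>Suc m. \<Sum>c\<le>1. f a c (Suc m) * f (Suc m - a) (1 - c) 1)"
    using coalg_morph_comult[OF f, of "Suc m" 1 "Suc m" 1] m by simp
  also have "\<dots> = f 1 0 1 * f m 1 (Suc m) + f 1 0 1 ^ Suc m * f 0 1 1"
    using coalg_morph_comult_at_1_1[OF f n] m by simp
  also have "\<dots> = of_nat n * f 1 0 1 ^ Suc m * f 0 1 1"
    using coalg_morph_subdiag[OF f n, of m] m by (simp add: algebra_simps)
  finally show ?thesis using alpha n by simp
qed

lemma coalg_morph_low_coeffs:
  fixes f :: "('a::field_char_0) sc"
  assumes f: "coalg_morph n f" and n: "2 \<le> n" and "f 1 0 1 \<noteq> 0"
  shows "f 0 0 0 = 1" "f 1 0 0 = 0" "f 0 1 0 = 0" "f 1 1 0 = 0" "f 0 0 1 = 0" "f 0 1 1 = 0"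
    and "i \<le> 1 \<Longrightarrow> j \<le> 1 \<Longrightarrow> 2 \<le> k \<Longrightarrow> k < n \<Longrightarrow> f i j k = 0"
proof -
  show "f 0 0 0 = 1" "f 1 0 0 = 0" "f 0 1 0 = 0" "f 1 1 0 = 0"
    using coalg_morph_counit[OF f] n by auto
  show "f 0 0 1 = 0" "f 0 1 1 = 0"
    using coalg_morph_0_0_1[OF f n] coalg_morph_0_1_1[OF assms] by auto
  show "f i j k = 0" if "i \<le> 1" "j \<le> 1" "2 \<le> k" "k < n"
  proof (cases "i + j < k")
    case True
    then show ?thesis using coalg_morph_eq_0_above_degree[OF f n] that by simp
  next
    case False
    then have "i = 1" "j = 1" "k = 1 + 1" using that by auto
    then show ?thesis
      using coalg_morph_comult[OF f, of 1 1 1 1] that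
        coalg_morph_0_0_1[OF f n] coalg_morph_0_1_1[OF assms]
      by simp
  qed
qed

lemma coalg_morph_1_0_eq_0:
  assumes f: "coalg_morph n f" and n: "2 \<le> n" and "m < n" "m \<noteq> 1"
  shows "f 1 0 m = 0"
  using coalg_morph_counit[OF f] coalg_morph_eq_0_above_degree[OF f n] assms
  by (cases "m = 0") auto

lemma regular_q_magma_1_0_1_nonzero:
  assumes reg: "regular_q_magma n p d" and n: "2 \<le> n"
  shows "p 1 0 1 \<noteq> 0" and "d 1 0 1 \<noteq> 0"
proof -
  have p: "coalg_morph n p" and d: "coalg_morph n d"
    using reg unfolding regular_q_magma_def by auto
  obtain u v where inverse: "\<forall>i<n. \<forall>j<n. \<forall>k<n.
      (\<Sum>s\<le>j. \<Sum>m<n. p i s m * u m (j - s) k) = (if j = 0 \<and> i = k then 1 else 0) \<and>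
      (\<Sum>s\<le>j. \<Sum>m<n. d i (j - s) m * v m s k) = (if j = 0 \<and> i = k then 1 else 0)"
    using reg unfolding regular_q_magma_def by blast
  have "(\<Sum>m<n. p 1 0 m * u m 0 1) = 1" and "(\<Sum>m<n. d 1 0 m * v m 0 1) = 1"
    using inverse[rule_format, of 1 0 1] n by auto
  then show "p 1 0 1 \<noteq> 0" and "d 1 0 1 \<noteq> 0"
    using n coalg_morph_1_0_eq_0[OF p n] coalg_morph_1_0_eq_0[OF d n]
    by (auto simp: sum_lessThan_eq_0_1 simp del: One_nat_def)
qed

theorem proposition2p2:
  fixes p d :: "('a::field_char_0) sc" and n :: nat
  assumes "alg_closed_field TYPE('a)"
    and "n \<ge> 2"
    and "regular_q_cycle n p d"
  shows "(d 1 0 1 = 1 \<and> p 1 0 1 = 1) \<or> (d 1 1 1 = 0 \<and> p 1 1 1 = 0)"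
proof -
  have n: "2 \<le> n" and reg: "regular_q_magma n p d"
    using assms(2,3) unfolding regular_q_cycle_def by auto
  have p: "coalg_morph n p" and d: "coalg_morph n d"
    using reg unfolding regular_q_magma_def by auto
  note nonzero = regular_q_magma_1_0_1_nonzero[OF reg n]
  note low = coalg_morph_low_coeffs[OF p n nonzero(1)] coalg_morph_low_coeffs[OF d n nonzero(2)]
  note cycle = assms(3)[unfolded regular_q_cycle_def, THEN conjunct2, rule_format]
  \<comment> \<open>\<open>One_nat_def\<close> is a simp rule, so rules about index \<open>1\<close> must be stated with \<open>Suc 0\<close>.\<close>
  note simps = sum_lessThan_eq_0_1 low[unfolded One_nat_def] atMost_Suc
  \<comment> \<open>Coefficient of \<open>x\<^sub>1\<close> in (1), (2), (3) at \<open>a = b = x\<^sub>1, c = x\<^sub>0\<close> and in (3) at \<open>a = c = x\<^sub>1, b = x\<^sub>0\<close>:\<close>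
  have "p 1 1 1 = 0 \<or> p 1 0 1 = 1"
    using cycle[of 1 1 0 1] n nonzero by (simp add: simps)
  moreover have "p 1 1 1 = 0 \<or> d 1 0 1 = 1"
    using cycle[of 1 1 0 1] n nonzero by (simp add: simps)
  moreover have "d 1 1 1 = 0 \<or> p 1 0 1 = 1"
    using cycle[of 1 1 0 1] n nonzero by (simp add: simps)
  moreover have "d 1 1 1 = 0 \<or> d 1 0 1 = 1"
    using cycle[of 1 0 1 1] n nonzero by (simp add: simps)
  ultimately show ?thesis by auto
qed

end
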